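(* Let $P$ and $Q$ be partial orders on the same finite ground set, and suppose the comparability graph of $P$ contains the comparability graph of $Q$ as a subgraph. Then $e(Q)\ge e(P)$, and if the containment is proper then $e(Q)>e(P)$.
   Context: The comparability graph of a poset is the simple graph on its ground set in which two distinct elements are adjacent iff they are comparable. $e(\cdot)$ denotes the number of linear extensions (order-preserving bijections from the ground set of size $n$ onto $[n]$). *)

theory Defs
  imports Main "HOL-Library.FuncSet"
begin

definition partial_order_on_set :: "'a set \<Rightarrow> ('a \<Rightarrow> 'a \<Rightarrow> bool) \<Rightarrow> bool" where
  "partial_order_on_set S R \<longleftrightarrow>
     (\<forall>x y. R x y \<longrightarrow> x \<in> S \<and> y \<in> S) \<and>
     (\<forall>x\<in>S. R x x) \<and>
     (\<forall>x y. R x y \<longrightarrow> R y x \<longrightarrow> x = y) \<and>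
     (\<forall>x y z. R x y \<longrightarrow> R y z \<longrightarrow> R x z)"

definition comp_graph :: "'a set \<Rightarrow> ('a \<Rightarrow> 'a \<Rightarrow> bool) \<Rightarrow> 'a set set" where
  "comp_graph S R = {{x, y} | x y. x \<in> S \<and> y \<in> S \<and> x \<noteq> y \<and> (R x y \<or> R y x)}"

text \<open>Linear extensions: order-preserving bijections from S onto {1..card S}
  (extensional outside S so that they form a finite set).\<close>
definition linear_extensions :: "'a set \<Rightarrow> ('a \<Rightarrow> 'a \<Rightarrow> bool) \<Rightarrow> ('a \<Rightarrow> nat) set" where
  "linear_extensions S R =
     {f \<in> extensional S. bij_betw f S {1..card S} \<and> (\<forall>x y. R x y \<longrightarrow> f x \<le> f y)}"

definition num_linear_extensions :: "'a set \<Rightarrow> ('a \<Rightarrow> 'a \<Rightarrow> bool) \<Rightarrow> nat" where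
  "num_linear_extensions S R = card (linear_extensions S R)"

end

theory Submission
  imports Defs Complex_Main
begin

(* For a poset P on an n-element set S and m \<in> \<nat> consider
     - the order points:  order-preserving maps S \<rightarrow> {0..m}, and
     - the chain points:  maps g : S \<rightarrow> \<nat> whose sum over every P-chain is \<le> m.
   Stanley's transfer map f \<mapsto> (x \<mapsto> f x - max of f strictly below x) is a bijection
   between the two sets, so both have the same cardinality.
   Injective order points correspond to pairs (linear extension, n-subset of {0..m}),
   and at most n^2 (m+1)^(n-1) order points are non-injective; hence
       e(P) (m+1 choose n) \<le> #chain points \<le> e(P) (m+1 choose n) + n^2 (m+1)^(n-1).
   Chains are cliques of the comparability graph, so fewer comparabilities in Q mean
   fewer chain constraints: every chain point of P is a chain point of Q.  Letting m be
   large enough that the error term is dominated gives e(P) \<le> e(Q).  If some edge {a,b}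
   of P is missing in Q, an explicit box of maps that are large on a and b consists of
   chain points of Q but not of P; it has K^n elements, which beats the error term
   for suitable K and m, giving e(P) < e(Q). *)

(* P-chains: sets of pairwise comparable elements (the library notion, whose
   constant name is hidden by Zorn's lemma). *)
abbreviation is_chain :: "('a \<Rightarrow> 'a \<Rightarrow> bool) \<Rightarrow> 'a set \<Rightarrow> bool" where
  "is_chain \<equiv> Complete_Partial_Order.chain"

lemma po_field: "partial_order_on_set S P \<Longrightarrow> P x y \<Longrightarrow> x \<in> S \<and> y \<in> S"
  and po_refl: "partial_order_on_set S P \<Longrightarrow> x \<in> S \<Longrightarrow> P x x"
  and po_antisym: "partial_order_on_set S P \<Longrightarrow> P x y \<Longrightarrow> P y x \<Longrightarrow> x = y"
  and po_trans: "partial_order_on_set S P \<Longrightarrow> P x y \<Longrightarrow> P y z \<Longrightarrow> P x z"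
  and po_transp: "partial_order_on_set S P \<Longrightarrow> transp P"
  unfolding partial_order_on_set_def transp_def by blast+

lemma chain_has_max:
  assumes "finite C" "C \<noteq> {}" "is_chain P C"
    and "transp P"
  shows "\<exists>z\<in>C. \<forall>c\<in>C. P c z"
  using assms(1-3)
proof (induction C rule: finite_ne_induct)
  case (singleton x)
  then show ?case by (auto simp: chain_def)
next
  case (insert x F)
  obtain z where z: "z \<in> F" "\<forall>c\<in>F. P c z"
    using insert.IH chain_subset[OF insert.prems] by blast
  from insert.prems z(1) consider "P x z" | "P z x" by (auto elim: chainE)
  then show ?case
  proof cases
    case 1
    then show ?thesis using z by auto
  next
    case 2
    then have "\<forall>c\<in>F. P c x" using z transpD[OF assms(4)] by blast
    then show ?thesis using insert.prems by (auto simp: chain_def)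
  qed
qed


(* The lattice points of the m-th dilates of the order polytope and of the chain
   polytope of P, as functions extensional on S. *)
definition order_points :: "'a set \<Rightarrow> ('a \<Rightarrow> 'a \<Rightarrow> bool) \<Rightarrow> nat \<Rightarrow> ('a \<Rightarrow> nat) set" where
  "order_points S P m =
     {f \<in> extensional S. (\<forall>x\<in>S. f x \<le> m) \<and> (\<forall>x y. P x y \<longrightarrow> f x \<le> f y)}"

definition chain_points :: "'a set \<Rightarrow> ('a \<Rightarrow> 'a \<Rightarrow> bool) \<Rightarrow> nat \<Rightarrow> ('a \<Rightarrow> nat) set" where
  "chain_points S P m = {g \<in> extensional S. \<forall>C. C \<subseteq> S \<longrightarrow> is_chain P C \<longrightarrow> sum g C \<le> m}"

lemma order_points_finite: "finite S \<Longrightarrow> finite (order_points S P m)"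
proof -
  assume "finite S"
  moreover have "order_points S P m \<subseteq> PiE S (\<lambda>_. {..m})"
    by (auto simp: order_points_def PiE_iff extensional_def)
  ultimately show ?thesis by (meson finite_PiE finite_atMost finite_subset)
qed

(* Singletons are chains, so chain points are bounded by m as well. *)
lemma chain_points_finite:
  assumes "finite S" "partial_order_on_set S P"
  shows "finite (chain_points S P m)"
proof -
  have "chain_points S P m \<subseteq> PiE S (\<lambda>_. {..m})"
  proof
    fix g assume g: "g \<in> chain_points S P m"
    have "g x \<le> m" if "x \<in> S" for x
    proof -
      have "is_chain P {x}" using po_refl[OF assms(2) that] by (auto simp: chain_def)
      then show ?thesis using g that unfolding chain_points_def by force
    qed
    then show "g \<in> PiE S (\<lambda>_. {..m})" using g by (auto simp: chain_points_def PiE_iff)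
  qed
  then show ?thesis using assms(1) by (meson finite_PiE finite_atMost finite_subset)
qed


definition below_max :: "('a \<Rightarrow> 'a \<Rightarrow> bool) \<Rightarrow> 'a set \<Rightarrow> ('a \<Rightarrow> nat) \<Rightarrow> 'a \<Rightarrow> nat" where
  "below_max P S f x = Max (insert 0 (f ` {y\<in>S. P y x \<and> y \<noteq> x}))"

definition transfer :: "('a \<Rightarrow> 'a \<Rightarrow> bool) \<Rightarrow> 'a set \<Rightarrow> ('a \<Rightarrow> nat) \<Rightarrow> 'a \<Rightarrow> nat" where
  "transfer P S f = restrict (\<lambda>x. f x - below_max P S f x) S"

definition chain_weights :: "('a \<Rightarrow> 'a \<Rightarrow> bool) \<Rightarrow> 'a set \<Rightarrow> ('a \<Rightarrow> nat) \<Rightarrow> 'a \<Rightarrow> nat set" where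
  "chain_weights P S g x = {sum g C | C. C \<subseteq> S \<and> is_chain P C \<and> x \<in> C \<and> (\<forall>c\<in>C. P c x)}"

(* The inverse transfer: x \<mapsto> maximal weight of a chain with top x. *)
definition max_chain_weight :: "('a \<Rightarrow> 'a \<Rightarrow> bool) \<Rightarrow> 'a set \<Rightarrow> ('a \<Rightarrow> nat) \<Rightarrow> 'a \<Rightarrow> nat" where
  "max_chain_weight P S g = restrict (\<lambda>x. Max (chain_weights P S g x)) S"

context
  fixes S :: "'a set" and P :: "'a \<Rightarrow> 'a \<Rightarrow> bool"
  assumes fin: "finite S" and po: "partial_order_on_set S P"
begin

lemma below_max_finite: "finite (insert 0 (f ` {y\<in>S. P y x \<and> y \<noteq> x}))"
  using fin by auto

lemma below_max_ge: "y \<in> S \<Longrightarrow> P y x \<Longrightarrow> y \<noteq> x \<Longrightarrow> f y \<le> below_max P S f x"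
  unfolding below_max_def by (rule Max_ge[OF below_max_finite]) auto

(* For order-preserving f the values below x are at most f x, so the transfer is exact. *)
lemma below_max_le: "f \<in> order_points S P m \<Longrightarrow> below_max P S f x \<le> f x"
  unfolding below_max_def order_points_def by (intro Max.boundedI[OF below_max_finite]) auto

lemma chain_weights_finite: "finite (chain_weights P S g x)"
proof -
  have "chain_weights P S g x \<subseteq> sum g ` Pow S" by (auto simp: chain_weights_def)
  then show ?thesis using fin finite_subset by blast
qed

lemma chain_weights_singleton: "x \<in> S \<Longrightarrow> g x \<in> chain_weights P S g x"
  unfolding chain_weights_def
  by (rule CollectI, rule exI[of _ "{x}"]) (auto simp: chain_def po_refl[OF po])

lemma max_chain_weight_attained:
  assumes "x \<in> S"
  obtains C where "max_chain_weight P S g x = sum g C" "C \<subseteq> S" "is_chain P C" "x \<in> C"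
    "\<forall>c\<in>C. P c x"
proof -
  have "chain_weights P S g x \<noteq> {}" using chain_weights_singleton[OF assms] by blast
  then have "Max (chain_weights P S g x) \<in> chain_weights P S g x"
    by (rule Max_in[OF chain_weights_finite])
  then show ?thesis using that assms unfolding chain_weights_def max_chain_weight_def by auto
qed

lemma max_chain_weight_ge:
  "x \<in> S \<Longrightarrow> w \<in> chain_weights P S g x \<Longrightarrow> w \<le> max_chain_weight P S g x"
  unfolding max_chain_weight_def by (simp add: Max_ge[OF chain_weights_finite])

(* Recursion for the maximal chain weight: an optimal chain with top x is {x} plus an
   optimal chain with top strictly below x.  Thus the transfer of it returns g. *)
lemma max_chain_weight_rec:
  assumes x: "x \<in> S"
  shows "max_chain_weight P S g x = g x + below_max P S (max_chain_weight P S g) x"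
proof (rule antisym)
  obtain C where C: "max_chain_weight P S g x = sum g C" "C \<subseteq> S" "is_chain P C" "x \<in> C"
    "\<forall>c\<in>C. P c x"
    using max_chain_weight_attained[OF x] .
  have fC: "finite C" using C(2) fin finite_subset by blast
  have split: "sum g C = g x + sum g (C - {x})" using C(4) fC by (simp add: sum.remove)
  have "sum g (C - {x}) \<le> below_max P S (max_chain_weight P S g) x"
  proof (cases "C - {x} = {}")
    case False
    obtain y where y: "y \<in> C - {x}" "\<forall>c\<in>C - {x}. P c y"
      using chain_has_max[OF _ False chain_subset[OF C(3)] po_transp[OF po]] fC by blast
    have "sum g (C - {x}) \<in> chain_weights P S g y"
      unfolding chain_weights_def using C y chain_subset[OF C(3)] by blast
    then have "sum g (C - {x}) \<le> max_chain_weight P S g y"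
      using y C(2) by (intro max_chain_weight_ge) auto
    also have "\<dots> \<le> below_max P S (max_chain_weight P S g) x"
      using y C by (intro below_max_ge) auto
    finally show ?thesis .
  qed (metis sum.empty zero_le)
  then show "max_chain_weight P S g x \<le> g x + below_max P S (max_chain_weight P S g) x"
    using C(1) split by simp
next
  have "below_max P S (max_chain_weight P S g) x
          \<in> insert 0 (max_chain_weight P S g ` {y\<in>S. P y x \<and> y \<noteq> x})"
    unfolding below_max_def by (rule Max_in[OF below_max_finite]) simp
  then show "g x + below_max P S (max_chain_weight P S g) x \<le> max_chain_weight P S g x"
  proof
    assume "below_max P S (max_chain_weight P S g) x = 0"
    then show ?thesis using max_chain_weight_ge[OF x chain_weights_singleton[OF x]] by simp
  next
    assume "below_max P S (max_chain_weight P S g) x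
              \<in> max_chain_weight P S g ` {y\<in>S. P y x \<and> y \<noteq> x}"
    then obtain y where y: "y \<in> S" "P y x" "y \<noteq> x"
      "below_max P S (max_chain_weight P S g) x = max_chain_weight P S g y" by blast
    obtain C where C: "max_chain_weight P S g y = sum g C" "C \<subseteq> S" "is_chain P C" "y \<in> C"
      "\<forall>c\<in>C. P c y"
      using max_chain_weight_attained[OF y(1)] .
    have below: "P c x" if "c \<in> C" for c using C(5) y(2) po_trans[OF po] that by blast
    have xC: "x \<notin> C" using C(5) y(2,3) po_antisym[OF po] by blast
    have "sum g (insert x C) \<in> chain_weights P S g x"
      unfolding chain_weights_def
    proof (intro CollectI exI conjI)
      show "is_chain P (insert x C)"
        using C(3) below po_refl[OF po x] unfolding chain_def by auto
    qed (use C(2) below po_refl[OF po x] x in auto)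
    then have "sum g (insert x C) \<le> max_chain_weight P S g x"
      by (rule max_chain_weight_ge[OF x])
    moreover have "finite C" using C(2) fin finite_subset by blast
    ultimately show ?thesis using y(4) C(1) xC by simp
  qed
qed

lemma max_chain_weight_order_point:
  assumes g: "g \<in> chain_points S P m"
  shows "max_chain_weight P S g \<in> order_points S P m"
proof -
  have bounded: "max_chain_weight P S g x \<le> m" if x: "x \<in> S" for x
  proof -
    obtain C where "max_chain_weight P S g x = sum g C" "C \<subseteq> S" "is_chain P C"
      using max_chain_weight_attained[OF x] .
    then show ?thesis using g unfolding chain_points_def by auto
  qed
  have mono: "max_chain_weight P S g x \<le> max_chain_weight P S g y" if "P x y" for x y
  proof (cases "x = y")
    case False
    have xy: "x \<in> S" "y \<in> S" using po_field[OF po that] by auto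
    show ?thesis
      using below_max_ge[OF xy(1) that False, of "max_chain_weight P S g"] max_chain_weight_rec[OF xy(2), of g] by linarith
  qed simp
  show ?thesis unfolding order_points_def using bounded mono by (auto simp: max_chain_weight_def)
qed

lemma max_chain_weight_inj: "inj_on (max_chain_weight P S) (chain_points S P m)"
proof (rule inj_onI)
  fix g1 g2 assume g: "g1 \<in> chain_points S P m" "g2 \<in> chain_points S P m"
    and eq: "max_chain_weight P S g1 = max_chain_weight P S g2"
  show "g1 = g2"
  proof (rule extensionalityI)
    show "g1 \<in> extensional S" "g2 \<in> extensional S" using g by (auto simp: chain_points_def)
    fix x assume "x \<in> S"
    then show "g1 x = g2 x"
      using max_chain_weight_rec[of x g1] max_chain_weight_rec[of x g2] eq by simp
  qed
qed

lemma transfer_rec: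
  assumes "f \<in> order_points S P m" "x \<in> S"
  shows "f x = transfer P S f x + below_max P S f x"
  using below_max_le[OF assms(1), of x] assms(2) by (simp add: transfer_def)

lemma transfer_chain_sum:
  assumes f: "f \<in> order_points S P m"
  shows "finite C \<Longrightarrow> C \<subseteq> S \<Longrightarrow> is_chain P C \<Longrightarrow> x \<in> S \<Longrightarrow> \<forall>c\<in>C. P c x
           \<Longrightarrow> sum (transfer P S f) C \<le> f x"
proof (induction C arbitrary: x rule: finite_psubset_induct)
  case (psubset C)
  show ?case
  proof (cases "C = {}")
    case False
    obtain z where z: "z \<in> C" "\<forall>c\<in>C. P c z"
      using chain_has_max[OF psubset.hyps False psubset.prems(2) po_transp[OF po]] by blast
    have zS: "z \<in> S" using z psubset.prems by auto
    have split: "sum (transfer P S f) C = transfer P S f z + sum (transfer P S f) (C - {z})"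
      using z(1) psubset.hyps by (simp add: sum.remove)
    have "sum (transfer P S f) (C - {z}) \<le> below_max P S f z"
    proof (cases "C - {z} = {}")
      case False
      obtain y where y: "y \<in> C - {z}" "\<forall>c\<in>C - {z}. P c y"
        using chain_has_max[OF _ False chain_subset[OF psubset.prems(2)] po_transp[OF po]]
          psubset.hyps by blast
      have yS: "y \<in> S" "P y z" "y \<noteq> z" using y z psubset.prems by auto
      have "sum (transfer P S f) (C - {z}) \<le> f y"
        using psubset.IH[of "C - {z}" y] z(1) y(2) yS(1) psubset.prems
          chain_subset[OF psubset.prems(2)] by blast
      also have "\<dots> \<le> below_max P S f z" using below_max_ge[OF yS] .
      finally show ?thesis .
    qed (metis sum.empty zero_le)
    then have "sum (transfer P S f) C \<le> f z" using split transfer_rec[OF f zS] by linarith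
    also have "f z \<le> f x" using f z(1) psubset.prems(4) unfolding order_points_def by auto
    finally show ?thesis .
  qed simp
qed

lemma transfer_chain_point:
  assumes f: "f \<in> order_points S P m"
  shows "transfer P S f \<in> chain_points S P m"
proof -
  have "sum (transfer P S f) C \<le> m" if C: "C \<subseteq> S" "is_chain P C" for C
  proof (cases "C = {}")
    case False
    have fC: "finite C" using C fin finite_subset by blast
    obtain z where z: "z \<in> C" "\<forall>c\<in>C. P c z"
      using chain_has_max[OF fC False C(2) po_transp[OF po]] by blast
    have "sum (transfer P S f) C \<le> f z"
      using transfer_chain_sum[OF f fC C] z C(1) by auto
    also have "\<dots> \<le> m" using f z(1) C(1) unfolding order_points_def by auto
    finally show ?thesis .
  qed simp
  then show ?thesis unfolding chain_points_def by (auto simp: transfer_def)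
qed

lemma transfer_inj: "inj_on (transfer P S) (order_points S P m)"
proof (rule inj_onI)
  fix f1 f2 assume f: "f1 \<in> order_points S P m" "f2 \<in> order_points S P m"
    and eq: "transfer P S f1 = transfer P S f2"
  have "x \<in> S \<longrightarrow> f1 x = f2 x" for x
  proof (induction "card {y\<in>S. P y x}" arbitrary: x rule: less_induct)
    case less
    show ?case
    proof
      assume x: "x \<in> S"
      have "f1 y = f2 y" if y: "y \<in> {y\<in>S. P y x \<and> y \<noteq> x}" for y
      proof -
        have "{z\<in>S. P z y} \<subset> {z\<in>S. P z x}"
          using y x po_trans[OF po] po_antisym[OF po] po_refl[OF po] by blast
        then have "card {z\<in>S. P z y} < card {z\<in>S. P z x}"
          using fin by (intro psubset_card_mono) auto
        then show ?thesis using less y by blast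
      qed
      then have "below_max P S f1 x = below_max P S f2 x"
        unfolding below_max_def by (metis (no_types, lifting) image_cong)
      then show "f1 x = f2 x" using transfer_rec[OF f(1) x] transfer_rec[OF f(2) x] eq by simp
    qed
  qed
  then show "f1 = f2" using f by (intro extensionalityI[of _ S]) (auto simp: order_points_def)
qed

theorem card_order_points_chain_points: "card (order_points S P m) = card (chain_points S P m)"
proof (rule antisym)
  show "card (order_points S P m) \<le> card (chain_points S P m)"
    by (rule card_inj_on_le[OF transfer_inj])
      (use transfer_chain_point chain_points_finite[OF fin po] in auto)
  show "card (chain_points S P m) \<le> card (order_points S P m)"
    by (rule card_inj_on_le[OF max_chain_weight_inj])
      (use max_chain_weight_order_point order_points_finite[OF fin] in auto)
qed

end


definition kth_smallest :: "nat set \<Rightarrow> nat \<Rightarrow> nat" where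
  "kth_smallest T k = sorted_list_of_set T ! (k - 1)"

lemma kth_smallest_strict_mono:
  assumes "i \<in> {1..card T}" "j \<in> {1..card T}" "i < j"
  shows "kth_smallest T i < kth_smallest T j"
proof -
  have "i - 1 < j - 1" "j - 1 < length (sorted_list_of_set T)"
    using assms length_sorted_list_of_set[of T] by auto
  with strict_sorted_list_of_set show ?thesis
    unfolding kth_smallest_def by (rule sorted_wrt_nth_less)
qed

lemma kth_smallest_mono_iff:
  assumes "i \<in> {1..card T}" "j \<in> {1..card T}"
  shows "kth_smallest T i \<le> kth_smallest T j \<longleftrightarrow> i \<le> j"
  using kth_smallest_strict_mono[OF assms] kth_smallest_strict_mono[OF assms(2,1)]
  by (metis linorder_neqE_nat not_le order.strict_implies_order order_refl)

lemma kth_smallest_bij: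
  assumes "finite T"
  shows "bij_betw (kth_smallest T) {1..card T} T"
proof -
  let ?L = "sorted_list_of_set T"
  have len: "length ?L = card T" and set: "set ?L = T" using assms by simp_all
  have "inj_on (kth_smallest T) {1..card T}"
    using kth_smallest_mono_iff by (intro inj_onI) (metis order_antisym order_refl)
  moreover have "kth_smallest T ` {1..card T} = T"
  proof
    show "kth_smallest T ` {1..card T} \<subseteq> T"
      using len set nth_mem by (fastforce simp: kth_smallest_def)
    show "T \<subseteq> kth_smallest T ` {1..card T}"
    proof
      fix t assume "t \<in> T"
      then obtain i where i: "i < length ?L" "?L ! i = t" using set by (metis in_set_conv_nth)
      then have "kth_smallest T (i + 1) = t" "i + 1 \<in> {1..card T}" using len
        by (auto simp: kth_smallest_def)
      then show "t \<in> kth_smallest T ` {1..card T}" by (metis image_eqI)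
    qed
  qed
  ultimately show ?thesis by (simp add: bij_betw_def)
qed

definition subsets_of_card :: "nat \<Rightarrow> nat \<Rightarrow> nat set set" where
  "subsets_of_card m n = {T. T \<subseteq> {0..m} \<and> card T = n}"

lemma card_subsets_of_card: "card (subsets_of_card m n) = Suc m choose n"
  unfolding subsets_of_card_def using n_subsets[of "{0..m}" n] by simp

definition relabel :: "'a set \<Rightarrow> ('a \<Rightarrow> nat) \<times> nat set \<Rightarrow> 'a \<Rightarrow> nat" where
  "relabel S p = restrict (\<lambda>x. kth_smallest (snd p) (fst p x)) S"

definition injective_order_points :: "'a set \<Rightarrow> ('a \<Rightarrow> 'a \<Rightarrow> bool) \<Rightarrow> nat \<Rightarrow> ('a \<Rightarrow> nat) set"
  where "injective_order_points S P m = {f \<in> order_points S P m. inj_on f S}"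

context
  fixes S :: "'a set" and P :: "'a \<Rightarrow> 'a \<Rightarrow> bool"
  assumes fin: "finite S" and po: "partial_order_on_set S P"
begin

lemma relabel_bij:
  assumes "bij_betw s S {1..card S}" "T \<in> subsets_of_card m (card S)"
  shows "bij_betw (relabel S (s, T)) S T"
proof -
  have "finite T" "card T = card S"
    using assms(2) unfolding subsets_of_card_def by (auto intro: finite_subset)
  then have "bij_betw (kth_smallest T) {1..card S} T" using kth_smallest_bij by metis
  then have "bij_betw (kth_smallest T \<circ> s) S T" using bij_betw_trans[OF assms(1)] by blast
  then show ?thesis by (rule bij_betw_cong[THEN iffD1, rotated]) (simp add: relabel_def)
qed

lemma relabel_injective_order_point:
  assumes s: "s \<in> linear_extensions S P" and T: "T \<in> subsets_of_card m (card S)"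
  shows "relabel S (s, T) \<in> injective_order_points S P m"
proof -
  have bs: "bij_betw s S {1..card S}" and ms: "\<And>x y. P x y \<Longrightarrow> s x \<le> s y"
    using s unfolding linear_extensions_def by auto
  have cT: "card T = card S" and Tm: "T \<subseteq> {0..m}" using T unfolding subsets_of_card_def by auto
  have b: "bij_betw (relabel S (s, T)) S T" by (rule relabel_bij[OF bs T])
  have "relabel S (s, T) x \<le> relabel S (s, T) y" if "P x y" for x y
  proof -
    have xy: "x \<in> S" "y \<in> S" using po_field[OF po that] by auto
    then have "s x \<in> {1..card T}" "s y \<in> {1..card T}" using bs cT unfolding bij_betw_def by auto
    then show ?thesis using ms[OF that] kth_smallest_mono_iff xy by (simp add: relabel_def)
  qed
  moreover have "\<forall>x\<in>S. relabel S (s, T) x \<le> m" using bij_betwE[OF b] Tm by force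
  ultimately show ?thesis using b unfolding injective_order_points_def order_points_def
    by (auto simp: bij_betw_def relabel_def)
qed

lemma relabel_inj: "inj_on (relabel S) (linear_extensions S P \<times> subsets_of_card m (card S))"
proof (rule inj_onI)
  fix p q assume p: "p \<in> linear_extensions S P \<times> subsets_of_card m (card S)"
    and q: "q \<in> linear_extensions S P \<times> subsets_of_card m (card S)" and eq: "relabel S p = relabel S q"
  obtain s T s' T' where pq: "p = (s, T)" "q = (s', T')" by (cases p, cases q)
  have bs: "bij_betw s S {1..card S}" "bij_betw s' S {1..card S}"
    using p q pq unfolding linear_extensions_def by auto
  have "bij_betw (relabel S p) S T" "bij_betw (relabel S q) S T'"
    using relabel_bij[OF bs(1)] relabel_bij[OF bs(2)] p q pq by auto
  then have "T = relabel S p ` S" "T' = relabel S q ` S" by (simp_all add: bij_betw_def)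
  then have TT: "T = T'" using eq by simp
  have cT: "card T = card S" using p pq unfolding subsets_of_card_def by auto
  have "s x = s' x" if x: "x \<in> S" for x
  proof -
    have "kth_smallest T (s x) = kth_smallest T (s' x)"
      using fun_cong[OF eq, of x] x pq TT by (simp add: relabel_def)
    moreover have "s x \<in> {1..card T}" "s' x \<in> {1..card T}"
      using bs x cT unfolding bij_betw_def by auto
    ultimately show ?thesis using kth_smallest_mono_iff by (metis order_antisym order_refl)
  qed
  moreover have "s \<in> extensional S" "s' \<in> extensional S"
    using p q pq unfolding linear_extensions_def by auto
  ultimately have "s = s'" by (intro extensionalityI) auto
  then show "p = q" using pq TT by simp
qed

(* Every injective order point arises by relabelling: sort its image. *)
lemma injective_order_point_relabel:
  assumes f: "f \<in> injective_order_points S P m"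
  shows "f \<in> relabel S ` (linear_extensions S P \<times> subsets_of_card m (card S))"
proof -
  let ?T = "f ` S"
  have fo: "f \<in> extensional S" "\<forall>x\<in>S. f x \<le> m" "\<And>x y. P x y \<Longrightarrow> f x \<le> f y" "inj_on f S"
    using f unfolding injective_order_points_def order_points_def by auto
  have Tf: "finite ?T" "card ?T = card S" using fin fo(4) by (auto simp: card_image)
  have T: "?T \<in> subsets_of_card m (card S)" using fo(2) Tf unfolding subsets_of_card_def by auto
  have bh: "bij_betw (kth_smallest ?T) {1..card S} ?T" using kth_smallest_bij[OF Tf(1)] Tf(2) by simp
  define s where "s = restrict (\<lambda>x. the_inv_into {1..card S} (kth_smallest ?T) (f x)) S"
  have hs: "kth_smallest ?T (s x) = f x" if "x \<in> S" for x
    unfolding s_def using that f_the_inv_into_f_bij_betw[OF bh] by auto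
  have bs: "bij_betw s S {1..card S}"
  proof -
    have "bij_betw f S ?T" using fo(4) by (simp add: bij_betw_def)
    from bij_betw_trans[OF this bij_betw_the_inv_into[OF bh]]
    show ?thesis by (rule bij_betw_cong[THEN iffD1, rotated]) (simp add: s_def)
  qed
  have "s x \<le> s y" if "P x y" for x y
  proof -
    have xy: "x \<in> S" "y \<in> S" using po_field[OF po that] by auto
    then have "s x \<in> {1..card ?T}" "s y \<in> {1..card ?T}" using bs Tf(2) unfolding bij_betw_def by auto
    then show ?thesis using kth_smallest_mono_iff hs xy fo(3)[OF that] by metis
  qed
  then have "s \<in> linear_extensions S P" unfolding linear_extensions_def using bs
    by (auto simp: s_def)
  moreover have "relabel S (s, ?T) = f"
    using hs fo(1) by (intro extensionalityI[of _ S]) (auto simp: relabel_def)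
  ultimately show ?thesis using T by (metis SigmaI image_eqI)
qed

lemma card_injective_order_points:
  "card (injective_order_points S P m) = num_linear_extensions S P * (Suc m choose card S)"
proof -
  have "relabel S ` (linear_extensions S P \<times> subsets_of_card m (card S))
          = injective_order_points S P m"
    using relabel_injective_order_point injective_order_point_relabel by blast
  then have "card (injective_order_points S P m)
               = card (linear_extensions S P \<times> subsets_of_card m (card S))"
    using card_image[OF relabel_inj] by metis
  then show ?thesis
    by (simp add: card_cartesian_product card_subsets_of_card num_linear_extensions_def)
qed

(* Maps S \<rightarrow> {0..m} identifying two given points are determined off one of them. *)
lemma card_maps_identifying_pair:
  assumes xy: "x \<in> S" "y \<in> S" "x \<noteq> y"
  shows "card {f \<in> PiE S (\<lambda>_. {..m}). f x = f y} \<le> Suc m ^ (card S - 1)"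
proof -
  let ?A = "{f \<in> PiE S (\<lambda>_. {..m}). f x = f y}"
  have inj: "inj_on (\<lambda>f. restrict f (S - {x})) ?A"
  proof (rule inj_onI)
    fix f g assume fg: "f \<in> ?A" "g \<in> ?A" "restrict f (S - {x}) = restrict g (S - {x})"
    have e: "f z = g z" if "z \<in> S - {x}" for z using fun_cong[OF fg(3), of z] that by simp
    moreover have "f x = g x" using fg(1,2) e[of y] xy by auto
    ultimately have "f z = g z" if "z \<in> S" for z using that by (cases "z = x") auto
    then show "f = g" using fg(1,2) by (intro extensionalityI[of _ S]) (auto simp: PiE_iff)
  qed
  have "(\<lambda>f. restrict f (S - {x})) ` ?A \<subseteq> PiE (S - {x}) (\<lambda>_. {..m})"
    by (auto simp: PiE_iff extensional_def split: if_splits)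
  then have "card ?A \<le> card (PiE (S - {x}) (\<lambda>_. {..m}))"
    by (rule card_inj_on_le[OF inj]) (use fin in \<open>simp add: finite_PiE\<close>)
  also have "\<dots> = Suc m ^ (card S - 1)" using fin xy(1) by (simp add: card_PiE)
  finally show ?thesis .
qed

(* A non-injective map identifies one of at most n^2 pairs. *)
lemma card_non_injective_maps:
  "card {f \<in> PiE S (\<lambda>_. {..m}). \<not> inj_on f S} \<le> card S * card S * Suc m ^ (card S - 1)"
proof -
  define I where "I = {p \<in> S \<times> S. fst p \<noteq> snd p}"
  define A where "A p = {f \<in> PiE S (\<lambda>_. {..m}). f (fst p) = f (snd p)}" for p
  have fI: "finite I" unfolding I_def using fin by auto
  have cI: "card I \<le> card S * card S"
    using card_mono[of "S \<times> S" I] fin unfolding I_def by (auto simp: card_cartesian_product)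
  have "{f \<in> PiE S (\<lambda>_. {..m}). \<not> inj_on f S} \<subseteq> (\<Union>p\<in>I. A p)"
    unfolding I_def A_def inj_on_def by auto
  then have "card {f \<in> PiE S (\<lambda>_. {..m}). \<not> inj_on f S} \<le> card (\<Union>p\<in>I. A p)"
    using fI fin by (intro card_mono) (auto simp: A_def finite_PiE)
  also have "\<dots> \<le> (\<Sum>p\<in>I. card (A p))" by (rule card_UN_le[OF fI])
  also have "\<dots> \<le> (\<Sum>p\<in>I. Suc m ^ (card S - 1))"
    using card_maps_identifying_pair unfolding A_def I_def by (intro sum_mono) auto
  also have "\<dots> \<le> card S * card S * Suc m ^ (card S - 1)" using cI by simp
  finally show ?thesis .
qed

lemma card_chain_points_bounds:
  "num_linear_extensions S P * (Suc m choose card S) \<le> card (chain_points S P m)"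
  "card (chain_points S P m)
     \<le> num_linear_extensions S P * (Suc m choose card S) + card S * card S * Suc m ^ (card S - 1)"
proof -
  let ?N = "{f \<in> PiE S (\<lambda>_. {..m}). \<not> inj_on f S}"
  have fO: "finite (order_points S P m)" by (rule order_points_finite[OF fin])
  have fN: "finite ?N" using fin by (simp add: finite_PiE)
  have "injective_order_points S P m \<subseteq> order_points S P m"
    unfolding injective_order_points_def by auto
  then show "num_linear_extensions S P * (Suc m choose card S) \<le> card (chain_points S P m)"
    using card_mono[OF fO] card_injective_order_points[of m]
      card_order_points_chain_points[OF fin po, of m]
    by metis
  have "order_points S P m \<subseteq> injective_order_points S P m \<union> ?N"
    unfolding injective_order_points_def order_points_def by (auto simp: PiE_iff)
  then have "card (order_points S P m) \<le> card (injective_order_points S P m \<union> ?N)"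
    using fO fN by (intro card_mono) (auto simp: injective_order_points_def)
  also have "\<dots> \<le> card (injective_order_points S P m) + card ?N" by (rule card_Un_le)
  finally show "card (chain_points S P m)
     \<le> num_linear_extensions S P * (Suc m choose card S) + card S * card S * Suc m ^ (card S - 1)"
    using card_injective_order_points[of m] card_non_injective_maps[of m]
      card_order_points_chain_points[OF fin po, of m] by linarith
qed

end


(* Chains are cliques of the comparability graph, so fewer comparabilities mean
   fewer constraints on chain points. *)
lemma chain_points_mono:
  assumes po: "partial_order_on_set S P" and sub: "comp_graph S Q \<subseteq> comp_graph S P"
  shows "chain_points S P m \<subseteq> chain_points S Q m"
proof -
  have "is_chain P C" if C: "C \<subseteq> S" "is_chain Q C" for C
  proof (rule chainI)
    fix x y assume xy: "x \<in> C" "y \<in> C"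
    show "P x y \<or> P y x"
    proof (cases "x = y")
      case True
      then show ?thesis using po_refl[OF po] C(1) xy by auto
    next
      case False
      have "Q x y \<or> Q y x" using C(2) xy by (auto elim: chainE)
      then have "{x, y} \<in> comp_graph S P"
        using sub C(1) xy False unfolding comp_graph_def by blast
      then show ?thesis unfolding comp_graph_def by (auto simp: doubleton_eq_iff)
    qed
  qed
  then show ?thesis unfolding chain_points_def by blast
qed

definition gap_box :: "'a set \<Rightarrow> 'a \<Rightarrow> 'a \<Rightarrow> nat \<Rightarrow> ('a \<Rightarrow> nat) set" where
  "gap_box S a b K =
     PiE S (\<lambda>x. if x = a \<or> x = b then {2 * card S * K + 1..3 * card S * K} else {..<K})"

(* Every factor of the box has at least K elements. *)
lemma card_gap_box:
  assumes "finite S" "a \<in> S"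
  shows "K ^ card S \<le> card (gap_box S a b K)"
proof -
  have "card S \<ge> 1" using assms card_gt_0_iff by (metis One_nat_def Suc_leI empty_iff)
  then have "K \<le> card (if x = a \<or> x = b then {2 * card S * K + 1..3 * card S * K} else {..<K})"
    for x by simp
  then have "(\<Prod>x\<in>S. K)
      \<le> (\<Prod>x\<in>S. card (if x = a \<or> x = b then {2 * card S * K + 1..3 * card S * K} else {..<K}))"
    by (intro prod_mono) auto
  then show ?thesis using assms(1) by (simp add: gap_box_def card_PiE)
qed

(* If a and b are Q-incomparable, no Q-chain contains both, so the box lies in the
   chain points of Q at level 4nK. *)
lemma gap_box_chain_points:
  assumes fin: "finite S" and incomparable: "\<not> Q a b" "\<not> Q b a"
  shows "gap_box S a b K \<subseteq> chain_points S Q (4 * card S * K)"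
proof
  fix g assume g: "g \<in> gap_box S a b K"
  let ?n = "card S"
  have "sum g C \<le> 4 * ?n * K" if C: "C \<subseteq> S" "is_chain Q C" for C
  proof -
    have "\<not> (a \<in> C \<and> b \<in> C)" using C(2) incomparable by (auto elim: chainE)
    then obtain e where e: "e = a \<or> e = b" "\<forall>x\<in>C - {e}. x \<noteq> a \<and> x \<noteq> b" by blast
    have fC: "finite C" using C fin finite_subset by blast
    have "\<forall>x\<in>C - {e}. g x \<le> K"
    proof
      fix x assume x: "x \<in> C - {e}"
      then have "x \<noteq> a" "x \<noteq> b" "x \<in> S" using e C(1) by auto
      then show "g x \<le> K" using PiE_mem[OF g[unfolded gap_box_def]] by fastforce
    qed
    then have "sum g (C - {e}) \<le> card (C - {e}) * K"
      using sum_bounded_above[of "C - {e}" g K] by simp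
    also have "\<dots> \<le> ?n * K" using C(1) fin by (intro mult_right_mono card_mono) auto
    finally have rest: "sum g (C - {e}) \<le> ?n * K" .
    show ?thesis
    proof (cases "e \<in> C")
      case True
      then have "g e \<in> {2 * ?n * K + 1..3 * ?n * K}"
        using PiE_mem[OF g[unfolded gap_box_def], of e] e(1) C(1) by auto
      moreover have "sum g C = g e + sum g (C - {e})" using True fC by (simp add: sum.remove)
      ultimately show ?thesis using rest by simp
    qed (use rest in simp)
  qed
  moreover have "g \<in> extensional S" using g unfolding gap_box_def PiE_iff by blast
  ultimately show "g \<in> chain_points S Q (4 * card S * K)" by (auto simp: chain_points_def)
qed

(* If a and b are P-comparable, {a, b} is a P-chain of weight more than 4nK. *)
lemma gap_box_not_chain_points:
  assumes po: "partial_order_on_set S P"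
    and ab: "a \<in> S" "b \<in> S" "a \<noteq> b" "P a b \<or> P b a"
  shows "gap_box S a b K \<inter> chain_points S P (4 * card S * K) = {}"
proof (rule ccontr)
  assume "gap_box S a b K \<inter> chain_points S P (4 * card S * K) \<noteq> {}"
  then obtain g where g: "g \<in> gap_box S a b K" "g \<in> chain_points S P (4 * card S * K)" by blast
  have "is_chain P {a, b}" using ab po_refl[OF po] by (auto intro: chainI)
  then have "sum g {a, b} \<le> 4 * card S * K"
    using g(2) ab(1,2) unfolding chain_points_def by simp
  then have "g a + g b \<le> 4 * card S * K" using ab(3) by simp
  moreover have "g a \<ge> 2 * card S * K + 1" "g b \<ge> 2 * card S * K + 1"
    using PiE_mem[OF g(1)[unfolded gap_box_def], of a] PiE_mem[OF g(1)[unfolded gap_box_def], of b] ab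
    by auto
  ultimately show False by simp
qed

lemma card_chain_points_gap:
  assumes fin: "finite S" and poP: "partial_order_on_set S P" and poQ: "partial_order_on_set S Q"
    and sub: "comp_graph S Q \<subseteq> comp_graph S P"
    and ab: "a \<in> S" "b \<in> S" "a \<noteq> b" "P a b \<or> P b a" "\<not> Q a b" "\<not> Q b a"
  shows "card (chain_points S P (4 * card S * K)) + K ^ card S
           \<le> card (chain_points S Q (4 * card S * K))"
proof -
  let ?m = "4 * card S * K" and ?D = "gap_box S a b K"
  have fQ: "finite (chain_points S Q ?m)" by (rule chain_points_finite[OF fin poQ])
  have in_Q: "chain_points S P ?m \<union> ?D \<subseteq> chain_points S Q ?m"
    using chain_points_mono[OF poP sub] gap_box_chain_points[where Q = Q and a = a and b = b, OF fin ab(5,6)] by blast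
  have "card (chain_points S P ?m) + card ?D = card (chain_points S P ?m \<union> ?D)"
    using gap_box_not_chain_points[OF poP ab(1-4)] finite_subset[OF in_Q fQ]
    by (intro card_Un_disjoint[symmetric]) auto
  also have "\<dots> \<le> card (chain_points S Q ?m)" using in_Q fQ by (rule card_mono[rotated])
  finally show ?thesis using card_gap_box[where b = b and K = K, OF fin ab(1)] by linarith
qed

lemma missing_edge:
  assumes "comp_graph S Q \<subset> comp_graph S P"
  obtains a b where "a \<in> S" "b \<in> S" "a \<noteq> b" "P a b \<or> P b a" "\<not> Q a b" "\<not> Q b a"
proof -
  obtain e where e: "e \<in> comp_graph S P" "e \<notin> comp_graph S Q" using assms by blast
  then obtain a b where "e = {a, b}" "a \<in> S" "b \<in> S" "a \<noteq> b" "P a b \<or> P b a"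
    unfolding comp_graph_def by blast
  moreover have "\<not> Q a b" "\<not> Q b a" using e calculation unfolding comp_graph_def by blast+
  ultimately show ?thesis using that by blast
qed


(* The error term n^2 N^(n-1) is smaller than (N choose n) for N = n^(n+2) + 1,
   using (N/n)^n \<le> (N choose n). *)
lemma error_below_binomial:
  fixes n :: nat
  shows "n * n * Suc (n ^ (n + 2)) ^ (n - 1) < Suc (n ^ (n + 2)) choose n"
proof (cases "n = 0")
  case False
  define N where "N = Suc (n ^ (n + 2))"
  obtain k where k: "n = Suc k" using False by (cases n) auto
  have "n \<le> n ^ (n + 2)" using power_increasing[of 1 "n + 2" n] False by simp
  then have nN: "n \<le> N" unfolding N_def by (rule le_SucI)
  have "(real N / real n) ^ n \<le> real (N choose n)"
    using binomial_ge_n_over_k_pow_k[OF nN, where 'a=real] by simp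
  then have "real N ^ n \<le> real n ^ n * real (N choose n)"
    using False by (simp add: power_divide divide_le_eq mult.commute)
  then have binom: "N ^ n \<le> n ^ n * (N choose n)" by (metis of_nat_le_iff of_nat_mult of_nat_power)
  have "n ^ n * (n * n * N ^ (n - 1)) = n ^ (n + 2) * N ^ k"
    using k by (simp add: power_add algebra_simps)
  also have "\<dots> < N * N ^ k" unfolding N_def using k by (intro mult_strict_right_mono) auto
  also have "\<dots> = N ^ n" using k by simp
  finally have "n ^ n * (n * n * N ^ (n - 1)) < n ^ n * (N choose n)" using binom by linarith
  then show ?thesis unfolding N_def by (meson mult_less_cancel1)
qed simp

lemma error_below_power:
  fixes n :: nat
  assumes n: "n \<ge> 1"
  defines "K \<equiv> n * n * (5 * n) ^ (n - 1) + 1"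
  shows "n * n * Suc (4 * n * K) ^ (n - 1) < K ^ n"
proof -
  obtain k where k: "n = Suc k" using n by (cases n) auto
  have "Suc (4 * n * K) \<le> 5 * n * K" using n by (simp add: K_def algebra_simps)
  then have "n * n * Suc (4 * n * K) ^ (n - 1) \<le> n * n * (5 * n * K) ^ (n - 1)"
    by (intro mult_left_mono power_mono) auto
  also have "\<dots> = (n * n * (5 * n) ^ (n - 1)) * K ^ k"
    using k by (simp only: diff_Suc_1 power_mult_distrib mult.assoc)
  also have "\<dots> < K * K ^ k" unfolding K_def by (intro mult_strict_right_mono) auto
  also have "\<dots> = K ^ n" using k by simp
  finally show ?thesis .
qed

(* Cancelling B from a B \<le> b B + E: an error E smaller than B cannot make up a
   whole extra copy of B. *)
lemma le_of_mult_le_add: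
  fixes a b B E :: nat
  assumes "a * B \<le> b * B + E" "E < B"
  shows "a \<le> b"
proof (rule ccontr)
  assume "\<not> a \<le> b"
  then have "(b + 1) * B \<le> a * B" by (intro mult_right_mono) auto
  then show False using assms by simp
qed

lemma num_linear_extensions_mono:
  assumes fin: "finite S" and poP: "partial_order_on_set S P" and poQ: "partial_order_on_set S Q"
    and sub: "comp_graph S Q \<subseteq> comp_graph S P"
  shows "num_linear_extensions S P \<le> num_linear_extensions S Q"
proof -
  let ?n = "card S"
  let ?m = "?n ^ (?n + 2)"
  have "card (chain_points S P ?m) \<le> card (chain_points S Q ?m)"
    using chain_points_mono[OF poP sub] chain_points_finite[OF fin poQ] by (rule card_mono[rotated])
  then have "num_linear_extensions S P * (Suc ?m choose ?n)
               \<le> num_linear_extensions S Q * (Suc ?m choose ?n) + ?n * ?n * Suc ?m ^ (?n - 1)"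
    using card_chain_points_bounds(1)[OF fin poP] card_chain_points_bounds(2)[OF fin poQ]
    by (meson le_trans)
  then show ?thesis using error_below_binomial by (rule le_of_mult_le_add)
qed

lemma num_linear_extensions_strict_mono:
  assumes fin: "finite S" and poP: "partial_order_on_set S P" and poQ: "partial_order_on_set S Q"
    and proper: "comp_graph S Q \<subset> comp_graph S P"
  shows "num_linear_extensions S P < num_linear_extensions S Q"
proof -
  obtain a b where ab: "a \<in> S" "b \<in> S" "a \<noteq> b" "P a b \<or> P b a" "\<not> Q a b" "\<not> Q b a"
    using missing_edge[OF proper] .
  let ?n = "card S"
  define K where "K = ?n * ?n * (5 * ?n) ^ (?n - 1) + 1"
  let ?m = "4 * ?n * K"
  have n: "?n \<ge> 1" using fin ab(1) by (metis One_nat_def Suc_leI card_gt_0_iff empty_iff)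
  have "card (chain_points S P ?m) + K ^ ?n \<le> card (chain_points S Q ?m)"
    using card_chain_points_gap[OF fin poP poQ _ ab] proper by blast
  then have "num_linear_extensions S P * (Suc ?m choose ?n) + K ^ ?n
          \<le> num_linear_extensions S Q * (Suc ?m choose ?n) + ?n * ?n * Suc ?m ^ (?n - 1)"
    using card_chain_points_bounds(1)[OF fin poP, of ?m] card_chain_points_bounds(2)[OF fin poQ, of ?m]
    by linarith
  then have "num_linear_extensions S P * (Suc ?m choose ?n)
               < num_linear_extensions S Q * (Suc ?m choose ?n)"
    using error_below_power[OF n] unfolding K_def by linarith
  then show ?thesis by (meson mult_less_cancel2)
qed

theorem mainTheorem8:
  fixes S :: "'a set" and P Q :: "'a \<Rightarrow> 'a \<Rightarrow> bool"
  assumes "finite S"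
    and "partial_order_on_set S P"
    and "partial_order_on_set S Q"
    and "comp_graph S Q \<subseteq> comp_graph S P"
  shows "num_linear_extensions S Q \<ge> num_linear_extensions S P
         \<and> (comp_graph S Q \<subset> comp_graph S P
              \<longrightarrow> num_linear_extensions S Q > num_linear_extensions S P)"
  using num_linear_extensions_mono[OF assms] num_linear_extensions_strict_mono[OF assms(1-3)]
  by blast

end
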